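(* Fix $\beta>1$. There exist $\varepsilon>0$ and $\delta>0$ such that for every power series of the form $g(x)=1+\sum_{k=1}^\infty(a_k-b_k)x^k$ with $(a_1,a_2,\ldots)\in S_\beta^+$ and $(b_1,b_2,\ldots)\in S_\beta^+$, and every $x\in[0,1/\beta+\varepsilon]$, if $|g(x)|<\delta$ then $g'(x)<-\delta$.
   Context: For $\beta>1$ let $f_\beta\colon[0,1]\to[0,1)$, $f_\beta(x)=\beta x\bmod 1$, and for $x\in[0,1]$ let $d(x,\beta)=(d_k(x,\beta))_{k\ge1}$ with $d_k(x,\beta)=\lfloor\beta f_\beta^{k-1}(x)\rfloor$. $S_\beta^+$ denotes the closure, in the product topology on $\{0,1,\ldots,\lfloor\beta\rfloor\}^{\mathbb N}$, of $\{d(x,\beta):x\in[0,1)\}$. *)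

theory Defs
  imports "HOL-Analysis.Analysis"
begin

definition fbeta :: "real \<Rightarrow> real \<Rightarrow> real" where
  "fbeta \<beta> x = \<beta> * x - of_int \<lfloor>\<beta> * x\<rfloor>"

text \<open>Greedy digits, 0-indexed: beta_digit beta x k = d_(k+1)(x, beta)
  = floor(beta * f_beta^k(x)).\<close>
definition beta_digit :: "real \<Rightarrow> real \<Rightarrow> nat \<Rightarrow> nat" where
  "beta_digit \<beta> x k = nat \<lfloor>\<beta> * (fbeta \<beta> ^^ k) x\<rfloor>"

text \<open>S_beta^+: closure (product topology on nat => nat, nat discrete) of the
  digit sequences of points of [0,1). Sequences are 0-indexed (s 0 = s_1).\<close>
definition Sbeta_plus :: "real \<Rightarrow> (nat \<Rightarrow> nat) set" where
  "Sbeta_plus \<beta> = closure ((\<lambda>x. beta_digit \<beta> x) ` {0..<1})"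

definition gser :: "(nat \<Rightarrow> nat) \<Rightarrow> (nat \<Rightarrow> nat) \<Rightarrow> real \<Rightarrow> real" where
  "gser a b y = 1 + (\<Sum>k. (real (a k) - real (b k)) * y ^ Suc k)"

end

theory Submission
  imports Defs
begin

text \<open>Write \<open>S\<^sub>c(x) = \<Sum>\<^sub>k c\<^sub>k x\<^sup>k\<^sup>+\<^sup>1\<close>, so that \<open>g = 1 + S\<^sub>a - S\<^sub>b\<close> and
  \<open>g' = S\<^sub>a' - S\<^sub>b'\<close>. Sequences in \<open>S\<^sub>\<beta>\<^sup>+\<close> have digits at most \<open>\<beta>\<close> and
  \<open>S\<^sub>c(1/\<beta>) \<le> 1\<close>, so \<open>S\<^sub>b \<le> 1 + \<theta>/2\<close> on \<open>[0, 1/\<beta> + \<epsilon>]\<close>. If \<open>|g(x)| < \<delta>\<close>, then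
  \<open>S\<^sub>b(x)\<close> is close to 1, which bounds \<open>x\<close> below by some \<open>x\<^sub>0 > 0\<close>, and
  \<open>S\<^sub>a(x) < \<theta>\<close>. Choosing \<open>\<theta> = x\<^sub>0\<^sup>K\<close> forces \<open>a\<^sub>0 = \<dots> = a\<^sub>K\<^sub>-\<^sub>1 = 0\<close>, so \<open>S\<^sub>a'(x)\<close>
  is at most the \<open>K\<close>-th tail of a fixed convergent series, which is below \<open>1/2\<close> for
  large \<open>K\<close>, while \<open>S\<^sub>b'(x) \<ge> S\<^sub>b(x)\<close> is close to 1.\<close>

lemma fbeta_nonneg: "0 \<le> fbeta \<beta> x"
  and fbeta_less_one: "fbeta \<beta> x < 1"
  unfolding fbeta_def by linarith+

lemma funpow_fbeta_nonneg: "0 \<le> x \<Longrightarrow> 0 \<le> (fbeta \<beta> ^^ k) x"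
  by (cases k) (auto simp: fbeta_nonneg)

lemma funpow_fbeta_less_one: "x < 1 \<Longrightarrow> (fbeta \<beta> ^^ k) x < 1"
  by (cases k) (auto simp: fbeta_less_one)

lemma beta_expansion:
  assumes "0 < \<beta>" and "0 \<le> x"
  shows "x = (\<Sum>k<N. real (beta_digit \<beta> x k) / \<beta> ^ Suc k) + (fbeta \<beta> ^^ N) x / \<beta> ^ N"
proof (induction N)
  case 0
  then show ?case by simp
next
  case (Suc N)
  let ?y = "(fbeta \<beta> ^^ N) x"
  have "0 \<le> \<lfloor>\<beta> * ?y\<rfloor>"
    using funpow_fbeta_nonneg[OF \<open>0 \<le> x\<close>] \<open>0 < \<beta>\<close> by simp
  then have digit: "real (beta_digit \<beta> x N) = of_int \<lfloor>\<beta> * ?y\<rfloor>"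
    unfolding beta_digit_def by simp
  have "?y / \<beta> ^ N = real (beta_digit \<beta> x N) / \<beta> ^ Suc N + (fbeta \<beta> ^^ Suc N) x / \<beta> ^ Suc N"
    using \<open>0 < \<beta>\<close> by (simp add: digit fbeta_def field_simps)
  with Suc show ?case by simp
qed

lemma beta_digit_le_floor:
  assumes "0 \<le> \<beta>" and "x \<in> {0..<1}"
  shows "beta_digit \<beta> x k \<le> nat \<lfloor>\<beta>\<rfloor>"
proof -
  let ?y = "(fbeta \<beta> ^^ k) x"
  have "0 \<le> ?y" "?y < 1"
    using assms funpow_fbeta_nonneg funpow_fbeta_less_one by auto
  with \<open>0 \<le> \<beta>\<close> have "\<lfloor>\<beta> * ?y\<rfloor> \<le> \<lfloor>\<beta>\<rfloor>"
    by (intro floor_mono) (simp add: mult_left_le)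
  then show ?thesis
    unfolding beta_digit_def by (simp add: nat_mono)
qed

lemma beta_digit_partial_sum_le_one:
  assumes "0 < \<beta>" and "x \<in> {0..<1}"
  shows "(\<Sum>k<N. real (beta_digit \<beta> x k) / \<beta> ^ Suc k) \<le> 1"
proof -
  have "0 \<le> (fbeta \<beta> ^^ N) x / \<beta> ^ N"
    using assms funpow_fbeta_nonneg by simp
  with beta_expansion[of \<beta> x N] assms show ?thesis
    by simp
qed

lemma continuous_on_real_coordinate: "continuous_on UNIV (\<lambda>c::nat \<Rightarrow> nat. real (c k))"
  using continuous_on_compose[of UNIV "\<lambda>c::nat \<Rightarrow> nat. c k" real]
  by (simp add: continuous_on_discrete o_def)

lemma closed_coordinatewise_le: "closed {c::nat \<Rightarrow> nat. \<forall>k. c k \<le> m}"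
proof -
  have "closed {c::nat \<Rightarrow> nat. real (c k) \<le> real m}" for k
    by (rule closed_Collect_le[OF continuous_on_real_coordinate continuous_on_const])
  then have "closed (\<Inter>k. {c::nat \<Rightarrow> nat. c k \<le> m})"
    by (intro closed_INT) simp
  then show ?thesis
    by (simp add: Collect_all_eq)
qed

lemma closed_partial_sums_le:
  "closed {c::nat \<Rightarrow> nat. \<forall>N. (\<Sum>k<N. real (c k) * w k) \<le> t}"
proof -
  have "closed {c::nat \<Rightarrow> nat. (\<Sum>k<N. real (c k) * w k) \<le> t}" for N
    by (intro closed_Collect_le continuous_on_sum continuous_on_mult_right
        continuous_on_real_coordinate continuous_on_const)
  then have "closed (\<Inter>N. {c::nat \<Rightarrow> nat. (\<Sum>k<N. real (c k) * w k) \<le> t})"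
    by (intro closed_INT) simp
  then show ?thesis
    by (simp add: Collect_all_eq)
qed

lemma Sbeta_plus_le_floor:
  assumes "0 \<le> \<beta>" and "c \<in> Sbeta_plus \<beta>"
  shows "c k \<le> nat \<lfloor>\<beta>\<rfloor>"
proof -
  have "Sbeta_plus \<beta> \<subseteq> {c. \<forall>k. c k \<le> nat \<lfloor>\<beta>\<rfloor>}"
    unfolding Sbeta_plus_def
    by (intro closure_minimal closed_coordinatewise_le) (auto intro: beta_digit_le_floor[OF \<open>0 \<le> \<beta>\<close>])
  with assms show ?thesis
    by auto
qed

lemma Sbeta_plus_partial_sum_le_one:
  assumes "0 < \<beta>" and "c \<in> Sbeta_plus \<beta>"
  shows "(\<Sum>k<N. real (c k) / \<beta> ^ Suc k) \<le> 1"
proof -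
  have "Sbeta_plus \<beta> \<subseteq> {c. \<forall>N. (\<Sum>k<N. real (c k) * (1 / \<beta> ^ Suc k)) \<le> 1}"
    unfolding Sbeta_plus_def
    by (intro closure_minimal closed_partial_sums_le)
      (auto simp del: power_Suc intro: beta_digit_partial_sum_le_one[OF \<open>0 < \<beta>\<close>])
  with assms show ?thesis
    by auto
qed

definition digit_series :: "(nat \<Rightarrow> nat) \<Rightarrow> real \<Rightarrow> real" where
  "digit_series c x = (\<Sum>k. real (c k) * x ^ Suc k)"

definition digit_series_deriv :: "(nat \<Rightarrow> nat) \<Rightarrow> real \<Rightarrow> real" where
  "digit_series_deriv c x = (\<Sum>k. real (Suc k) * real (c k) * x ^ k)"

lemma sums_geometric_Suc:
  fixes x :: real
  assumes "\<bar>x\<bar> < 1"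
  shows "(\<lambda>k. B * x ^ Suc k) sums (B * x / (1 - x))"
  using sums_mult[OF geometric_sums[of x], of "B * x"] assms by (simp add: mult.assoc)

lemma summable_Suc_times_power:
  fixes x :: real
  assumes "\<bar>x\<bar> < 1"
  shows "summable (\<lambda>k. real (Suc k) * x ^ k)"
  using termdiff_converges[of x 1 "\<lambda>_. 1"] summable_geometric assms by (simp add: diffs_def)

lemma summable_digit_series:
  assumes "\<forall>k. real (c k) \<le> B" and "0 \<le> x" "x < 1"
  shows "summable (\<lambda>k. real (c k) * x ^ Suc k)"
proof (rule summable_comparison_test'[OF sums_summable[OF sums_geometric_Suc]])
  show "norm (real (c n) * x ^ Suc n) \<le> B * x ^ Suc n" for n
    using assms by (simp add: mult_right_mono)
qed (use assms in auto)

lemma summable_digit_series_deriv: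
  assumes "\<forall>k. real (c k) \<le> B" and "0 \<le> x" "x < 1"
  shows "summable (\<lambda>k. real (Suc k) * real (c k) * x ^ k)"
proof (rule summable_comparison_test'[OF summable_mult[OF summable_Suc_times_power]])
  show "norm (real (Suc n) * real (c n) * x ^ n) \<le> B * (real (Suc n) * x ^ n)" for n
    using assms mult_right_mono[of "real (c n)" B "real (Suc n) * x ^ n"] by (simp add: algebra_simps)
qed (use assms in auto)

lemma digit_series_nonneg:
  assumes "\<forall>k. real (c k) \<le> B" and "0 \<le> x" "x < 1"
  shows "0 \<le> digit_series c x"
  unfolding digit_series_def using assms by (intro suminf_nonneg summable_digit_series) auto

lemma digit_series_mono:
  assumes "\<forall>k. real (c k) \<le> B" and "0 \<le> x" "x \<le> y" "y < 1"
  shows "digit_series c x \<le> digit_series c y"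
  unfolding digit_series_def
  using assms summable_digit_series[of c B]
  by (intro suminf_le mult_left_mono power_mono) auto

lemma digit_series_le_geometric:
  assumes "\<forall>k. real (c k) \<le> B" and "0 \<le> x" "x < 1"
  shows "digit_series c x \<le> B * x / (1 - x)"
proof (rule sums_le)
  show "(\<lambda>k. real (c k) * x ^ Suc k) sums digit_series c x"
    unfolding digit_series_def using assms by (intro summable_sums summable_digit_series)
  show "(\<lambda>k. B * x ^ Suc k) sums (B * x / (1 - x))"
    using assms by (intro sums_geometric_Suc) simp
  show "real (c k) * x ^ Suc k \<le> B * x ^ Suc k" for k
    using assms by (simp add: mult_right_mono)
qed

lemma digit_series_increment_le:
  assumes "\<forall>k. real (c k) \<le> B" and "0 \<le> q" "q \<le> x" "x < 1"
  shows "digit_series c x - digit_series c q \<le> B * (x - q) / ((1 - x) * (1 - q))"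
proof -
  have "(\<lambda>k. real (c k) * x ^ Suc k - real (c k) * q ^ Suc k)
          sums (digit_series c x - digit_series c q)"
    unfolding digit_series_def using assms
    by (intro sums_diff summable_sums summable_digit_series) auto
  moreover have "(\<lambda>k. B * x ^ Suc k - B * q ^ Suc k) sums (B * x / (1 - x) - B * q / (1 - q))"
    using assms by (intro sums_diff sums_geometric_Suc) auto
  moreover have "real (c k) * x ^ Suc k - real (c k) * q ^ Suc k \<le> B * x ^ Suc k - B * q ^ Suc k"
    for k
  proof -
    have "q ^ Suc k \<le> x ^ Suc k"
      using assms by (intro power_mono) auto
    then show ?thesis
      using assms mult_right_mono[of "real (c k)" B "x ^ Suc k - q ^ Suc k"]
      by (simp add: algebra_simps)
  qed
  ultimately have "digit_series c x - digit_series c q \<le> B * x / (1 - x) - B * q / (1 - q)"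
    by (rule sums_le[rotated 1])
  also have "\<dots> = B * (x - q) / ((1 - x) * (1 - q))"
    using assms by (simp add: field_simps)
  finally show ?thesis .
qed

lemma digit_series_le_deriv:
  assumes "\<forall>k. real (c k) \<le> B" and "0 \<le> x" "x < 1"
  shows "digit_series c x \<le> digit_series_deriv c x"
  unfolding digit_series_def digit_series_deriv_def
proof (rule suminf_le)
  show "real (c k) * x ^ Suc k \<le> real (Suc k) * real (c k) * x ^ k" for k
  proof -
    have "x ^ Suc k \<le> real (Suc k) * x ^ k"
      using assms mult_right_mono[of x "real (Suc k)" "x ^ k"] by simp
    then show ?thesis
      using mult_left_mono[of "x ^ Suc k" "real (Suc k) * x ^ k" "real (c k)"]
      by (simp add: algebra_simps)
  qed
qed (use assms summable_digit_series summable_digit_series_deriv in auto)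

lemma digit_series_less_power_imp_leading_zeros:
  assumes "\<forall>k. real (c k) \<le> B" and "0 \<le> x" "x < 1"
    and "digit_series c x < x ^ K" and "k < K"
  shows "c k = 0"
proof (rule ccontr)
  assume "c k \<noteq> 0"
  have "x ^ K \<le> x ^ Suc k"
    by (rule power_decreasing) (use assms in auto)
  also have "\<dots> \<le> real (c k) * x ^ Suc k"
    using \<open>c k \<noteq> 0\<close> assms mult_right_mono[of 1 "real (c k)" "x ^ Suc k"] by simp
  also have "\<dots> \<le> digit_series c x"
    unfolding digit_series_def
    using assms by (intro sum_le_suminf[of _ "{k}", simplified] summable_digit_series) auto
  finally show False
    using assms by simp
qed

lemma digit_series_deriv_small_if_leading_zeros:
  assumes "0 \<le> r" "r < 1" and "0 < \<eta>"
  obtains K where "\<And>c x. \<forall>k. real (c k) \<le> B \<Longrightarrow> 0 \<le> x \<Longrightarrow> x \<le> r \<Longrightarrow> \<forall>k<K. c k = 0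
                      \<Longrightarrow> digit_series_deriv c x < \<eta>"
proof -
  let ?t = "\<lambda>k. B * (real (Suc k) * r ^ k)"
  have "summable ?t"
    using assms by (intro summable_mult summable_Suc_times_power) simp
  then obtain K where K: "norm (\<Sum>i. ?t (i + K)) < \<eta>"
    using suminf_exist_split[OF \<open>0 < \<eta>\<close>] by blast
  have "digit_series_deriv c x < \<eta>"
    if c: "\<forall>k. real (c k) \<le> B" and x: "0 \<le> x" "x \<le> r" and zero: "\<forall>k<K. c k = 0" for c x
  proof -
    let ?f = "\<lambda>k. real (Suc k) * real (c k) * x ^ k"
    have "summable ?f"
      using c x \<open>r < 1\<close> by (intro summable_digit_series_deriv) auto
    then have "digit_series_deriv c x = (\<Sum>i. ?f (i + K))"
      unfolding digit_series_deriv_def using zero by (simp add: suminf_split_initial_segment[of _ K])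
    also have "\<dots> \<le> (\<Sum>i. ?t (i + K))"
    proof (rule suminf_le)
      fix i
      have "real (c (i + K)) * x ^ (i + K) \<le> B * r ^ (i + K)"
        using c x order_trans[OF of_nat_0_le_iff c[rule_format, of 0]]
        by (intro mult_mono power_mono) auto
      then have "real (Suc (i + K)) * (real (c (i + K)) * x ^ (i + K))
                   \<le> real (Suc (i + K)) * (B * r ^ (i + K))"
        by (rule mult_left_mono) simp
      then show "?f (i + K) \<le> ?t (i + K)"
        by (simp add: ac_simps)
    qed (rule summable_ignore_initial_segment, fact)+
    also have "\<dots> < \<eta>"
      using K by simp
    finally show ?thesis .
  qed
  then show ?thesis
    by (rule that)
qed

lemma has_real_derivative_power_series_Suc:
  fixes c :: "nat \<Rightarrow> real"
  assumes "\<And>k. \<bar>c k\<bar> \<le> B" and "\<bar>x\<bar> < 1"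
  shows "((\<lambda>y. \<Sum>k. c k * y ^ Suc k) has_real_derivative (\<Sum>k. real (Suc k) * c k * x ^ k)) (at x)"
proof -
  define c' where "c' n = (case n of 0 \<Rightarrow> 0 | Suc k \<Rightarrow> c k)" for n
  have shift: "(\<lambda>y. \<Sum>k. c k * y ^ Suc k) = (\<lambda>y. \<Sum>n. c' n * y ^ n)"
  proof
    fix y :: real
    have "(sums) (\<lambda>k. c k * y ^ Suc k) = (sums) (\<lambda>n. c' n * y ^ n)"
      using sums_Suc_iff[of "\<lambda>n. c' n * y ^ n"] by (simp add: c'_def fun_eq_iff)
    then show "(\<Sum>k. c k * y ^ Suc k) = (\<Sum>n. c' n * y ^ n)"
      unfolding suminf_def by simp
  qed
  define K where "K = (1 + \<bar>x\<bar>) / 2"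
  have K: "\<bar>x\<bar> < K" "K < 1"
    using assms(2) by (auto simp: K_def)
  have "\<bar>c' n\<bar> \<le> B" for n
    using assms(1) order_trans[OF abs_ge_zero assms(1)] by (simp add: c'_def split: nat.split)
  then have "summable (\<lambda>n. c' n * K ^ n)"
    using K by (intro summable_comparison_test'[OF summable_mult[OF summable_geometric[of K]]])
      (auto simp: abs_mult intro: mult_right_mono)
  then have "((\<lambda>y. \<Sum>n. c' n * y ^ n) has_real_derivative (\<Sum>n. diffs c' n * x ^ n)) (at x)"
    using K by (intro termdiffs_strong) auto
  moreover have "diffs c' n = real (Suc n) * c n" for n
    by (simp add: diffs_def c'_def)
  ultimately show ?thesis
    unfolding shift by simp
qed

lemma gser_eq_digit_series:
  assumes "\<forall>k. real (a k) \<le> B" "\<forall>k. real (b k) \<le> B" and "0 \<le> x" "x < 1"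
  shows "gser a b x = 1 + digit_series a x - digit_series b x"
proof -
  have "(\<Sum>k. (real (a k) - real (b k)) * x ^ Suc k)
          = (\<Sum>k. real (a k) * x ^ Suc k - real (b k) * x ^ Suc k)"
    by (simp add: algebra_simps)
  also have "\<dots> = digit_series a x - digit_series b x"
    unfolding digit_series_def using assms
    by (intro suminf_diff[symmetric] summable_digit_series) auto
  finally show ?thesis
    unfolding gser_def by simp
qed

lemma deriv_gser:
  assumes "\<forall>k. real (a k) \<le> B" "\<forall>k. real (b k) \<le> B" and "0 \<le> x" "x < 1"
  shows "deriv (gser a b) x = digit_series_deriv a x - digit_series_deriv b x"
proof -
  have "\<bar>real (a k) - real (b k)\<bar> \<le> B" for k
    using assms(1,2)[rule_format, of k] by linarith
  then have "((\<lambda>y. \<Sum>k. (real (a k) - real (b k)) * y ^ Suc k) has_real_derivative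
               (\<Sum>k. real (Suc k) * (real (a k) - real (b k)) * x ^ k)) (at x)"
    using assms by (intro has_real_derivative_power_series_Suc) auto
  then have "(gser a b has_real_derivative
               (\<Sum>k. real (Suc k) * (real (a k) - real (b k)) * x ^ k)) (at x)"
    unfolding gser_def[abs_def] using DERIV_add[OF DERIV_const] by fastforce
  then have "deriv (gser a b) x = (\<Sum>k. real (Suc k) * (real (a k) - real (b k)) * x ^ k)"
    by (rule DERIV_imp_deriv)
  also have "\<dots> = (\<Sum>k. real (Suc k) * real (a k) * x ^ k - real (Suc k) * real (b k) * x ^ k)"
    by (simp add: algebra_simps)
  also have "\<dots> = digit_series_deriv a x - digit_series_deriv b x"
    unfolding digit_series_deriv_def using assms
    by (intro suminf_diff[symmetric] summable_digit_series_deriv) auto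
  finally show ?thesis .
qed

lemma Sbeta_plus_le:
  assumes "0 \<le> \<beta>" and "c \<in> Sbeta_plus \<beta>"
  shows "real (c k) \<le> \<beta>"
proof -
  have "real (c k) \<le> real (nat \<lfloor>\<beta>\<rfloor>)"
    using Sbeta_plus_le_floor[OF assms] by simp
  also have "\<dots> \<le> \<beta>"
    using \<open>0 \<le> \<beta>\<close> by simp
  finally show ?thesis .
qed

lemma digit_series_inverse_le_one:
  assumes "1 < \<beta>" and "c \<in> Sbeta_plus \<beta>"
  shows "digit_series c (1 / \<beta>) \<le> 1"
  unfolding digit_series_def
proof (rule suminf_le_const)
  show "summable (\<lambda>k. real (c k) * (1 / \<beta>) ^ Suc k)"
    using assms Sbeta_plus_le[of \<beta> c] by (intro summable_digit_series) auto
  show "(\<Sum>k<N. real (c k) * (1 / \<beta>) ^ Suc k) \<le> 1" for N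
    using Sbeta_plus_partial_sum_le_one[of \<beta> c N] assms
    unfolding power_one_over by (simp del: power_Suc)
qed

lemma Sbeta_plus_digit_series_near_inverse:
  assumes "1 < \<beta>" and "1 / \<beta> < r" "r < 1" and "0 < \<eta>"
  obtains \<epsilon> where "0 < \<epsilon>" "1 / \<beta> + \<epsilon> \<le> r"
    and "\<And>c x. c \<in> Sbeta_plus \<beta> \<Longrightarrow> 0 \<le> x \<Longrightarrow> x \<le> 1 / \<beta> + \<epsilon> \<Longrightarrow> digit_series c x \<le> 1 + \<eta>"
proof
  define q where "q = 1 / \<beta>"
  have q: "0 < q" "q < r"
    using assms by (auto simp: q_def)
  define \<epsilon> where "\<epsilon> = min (r - q) (\<eta> * (1 - r) * (1 - q) / \<beta>)"
  show "0 < \<epsilon>" "1 / \<beta> + \<epsilon> \<le> r"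
    using assms q by (auto simp: \<epsilon>_def q_def)
  fix c x
  assume c: "c \<in> Sbeta_plus \<beta>" and x: "0 \<le> x" "x \<le> 1 / \<beta> + \<epsilon>"
  have bound: "\<forall>k. real (c k) \<le> \<beta>"
    using Sbeta_plus_le[OF _ c] assms by auto
  have "x \<le> r"
    using x by (simp add: \<epsilon>_def q_def)
  have at_q: "digit_series c q \<le> 1"
    using digit_series_inverse_le_one[OF assms(1) c] by (simp add: q_def)
  show "digit_series c x \<le> 1 + \<eta>"
  proof (cases "x \<le> q")
    case True
    then have "digit_series c x \<le> digit_series c q"
      using bound x q \<open>r < 1\<close> by (intro digit_series_mono) auto
    with at_q \<open>0 < \<eta>\<close> show ?thesis
      by linarith
  next
    case False
    have "digit_series c x - digit_series c q \<le> \<beta> * (x - q) / ((1 - x) * (1 - q))"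
      using bound False q \<open>x \<le> r\<close> \<open>r < 1\<close> by (intro digit_series_increment_le) auto
    also have "\<dots> \<le> \<beta> * \<epsilon> / ((1 - r) * (1 - q))"
      using False x q \<open>x \<le> r\<close> \<open>r < 1\<close> assms(1)
      by (intro frac_le mult_left_mono mult_mono) (auto simp: q_def)
    also have "\<dots> \<le> \<eta>"
    proof -
      have "\<epsilon> \<le> \<eta> * (1 - r) * (1 - q) / \<beta>"
        by (simp add: \<epsilon>_def)
      then have "\<beta> * \<epsilon> \<le> \<eta> * ((1 - r) * (1 - q))"
        using assms(1) by (simp add: field_simps)
      moreover have "0 < (1 - r) * (1 - q)"
        using q \<open>r < 1\<close> by simp
      ultimately show ?thesis
        by (simp add: pos_divide_le_eq)
    qed
    finally show ?thesis
      using at_q by linarith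
  qed
qed

lemma digit_series_ge_imp_point_ge:
  assumes "\<forall>k. real (c k) \<le> B" "0 < B" and "0 \<le> x" "x \<le> r" "r < 1"
    and "t \<le> digit_series c x"
  shows "t * (1 - r) / B \<le> x"
proof -
  have "digit_series c x \<le> B * x / (1 - x)"
    using assms by (intro digit_series_le_geometric) auto
  then have "t \<le> B * x / (1 - x)"
    using assms by linarith
  also have "\<dots> \<le> B * x / (1 - r)"
    using assms by (intro frac_le) auto
  finally show ?thesis
    using assms by (simp add: field_simps)
qed

lemma deriv_gser_less_if_gser_small:
  fixes \<beta> r \<delta> :: real and K :: nat
  defines "\<theta> \<equiv> ((1 - r) / (2 * \<beta>)) ^ K"
  assumes bounds: "\<forall>k. real (a k) \<le> \<beta>" "\<forall>k. real (b k) \<le> \<beta>" and "0 < \<beta>"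
    and x: "0 \<le> x" "x \<le> r" "r < 1"
    and tail: "\<And>c y. \<forall>k. real (c k) \<le> \<beta> \<Longrightarrow> 0 \<le> y \<Longrightarrow> y \<le> r \<Longrightarrow> \<forall>k<K. c k = 0
                      \<Longrightarrow> digit_series_deriv c y < 1/2"
    and near: "digit_series b x \<le> 1 + \<theta> / 2"
    and small: "\<bar>gser a b x\<bar> < \<delta>" and \<delta>: "\<delta> \<le> 1/4" "\<delta> \<le> \<theta> / 2"
  shows "deriv (gser a b) x < - \<delta>"
proof -
  have "x < 1"
    using x by linarith
  have "0 \<le> digit_series a x"
    using bounds \<open>x < 1\<close> x by (intro digit_series_nonneg) auto
  moreover have "gser a b x = 1 + digit_series a x - digit_series b x"
    using bounds \<open>x < 1\<close> x by (intro gser_eq_digit_series) auto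
  ultimately have Sa: "digit_series a x < \<theta>" and Sb: "3/4 < digit_series b x"
    using near small \<delta> by (auto simp: abs_less_iff)
  have "(1/2) * (1 - r) / \<beta> \<le> x"
    using bounds Sb x \<open>0 < \<beta>\<close> by (intro digit_series_ge_imp_point_ge[where c = b]) auto
  then have "\<theta> \<le> x ^ K"
    unfolding \<theta>_def using x \<open>0 < \<beta>\<close> by (intro power_mono) auto
  with Sa have "digit_series a x < x ^ K"
    by linarith
  then have "\<forall>k<K. a k = 0"
    using bounds \<open>x < 1\<close> x by (auto intro: digit_series_less_power_imp_leading_zeros)
  then have "digit_series_deriv a x < 1/2"
    using tail bounds x by blast
  moreover have "digit_series b x \<le> digit_series_deriv b x"
    using bounds \<open>x < 1\<close> x by (intro digit_series_le_deriv) auto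
  moreover have "deriv (gser a b) x = digit_series_deriv a x - digit_series_deriv b x"
    using bounds \<open>x < 1\<close> x by (intro deriv_gser) auto
  ultimately show ?thesis
    using Sb \<delta> by linarith
qed

theorem lemma5p1:
  fixes \<beta> :: real
  assumes "\<beta> > 1"
  shows "\<exists>\<epsilon>>0. \<exists>\<delta>>0. \<forall>a\<in>Sbeta_plus \<beta>. \<forall>b\<in>Sbeta_plus \<beta>.
           \<forall>x\<in>{0..1/\<beta> + \<epsilon>}.
             \<bar>gser a b x\<bar> < \<delta> \<longrightarrow> deriv (gser a b) x < - \<delta>"
proof -
  have "0 < 1 / \<beta>" "1 / \<beta> < 1"
    using assms by auto
  then obtain r where r: "1 / \<beta> < r" "r < 1" "0 \<le> r"
    by (meson dense less_imp_le order.strict_trans)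
  obtain K where tail: "\<And>c x. \<forall>k. real (c k) \<le> \<beta> \<Longrightarrow> 0 \<le> x \<Longrightarrow> x \<le> r \<Longrightarrow> \<forall>k<K. c k = 0
                            \<Longrightarrow> digit_series_deriv c x < 1/2"
    by (rule digit_series_deriv_small_if_leading_zeros[OF r(3,2), of "1/2"]) auto
  define \<theta> where "\<theta> = ((1 - r) / (2 * \<beta>)) ^ K"
  have "0 < \<theta>"
    using r assms by (simp add: \<theta>_def)
  obtain \<epsilon> where "0 < \<epsilon>" and "1 / \<beta> + \<epsilon> \<le> r"
    and near: "\<And>c x. c \<in> Sbeta_plus \<beta> \<Longrightarrow> 0 \<le> x \<Longrightarrow> x \<le> 1 / \<beta> + \<epsilon>
                      \<Longrightarrow> digit_series c x \<le> 1 + \<theta> / 2"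
    by (rule Sbeta_plus_digit_series_near_inverse[OF assms r(1,2), of "\<theta> / 2"])
      (use \<open>0 < \<theta>\<close> in auto)
  define \<delta> where "\<delta> = min (1/4) (\<theta> / 2)"
  have "0 < \<delta>"
    using \<open>0 < \<theta>\<close> by (simp add: \<delta>_def)
  have "deriv (gser a b) x < - \<delta>"
    if "a \<in> Sbeta_plus \<beta>" "b \<in> Sbeta_plus \<beta>" "0 \<le> x" "x \<le> 1 / \<beta> + \<epsilon>" "\<bar>gser a b x\<bar> < \<delta>"
    for a b x
    using that near[of b x] Sbeta_plus_le[of \<beta>] assms \<open>1 / \<beta> + \<epsilon> \<le> r\<close> r
    by (intro deriv_gser_less_if_gser_small[where K = K, OF _ _ _ _ _ _ tail])
      (auto simp: \<delta>_def \<theta>_def)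
  with \<open>0 < \<epsilon>\<close> \<open>0 < \<delta>\<close> show ?thesis
    by (intro exI[of _ \<epsilon>] exI[of _ \<delta>] conjI ballI impI) auto
qed

end
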